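(* Let $n\ge3$, let $K$ be a binary dihedral group of order $8d$ with $d\ge2$, and let $H=[K,K]$ (cyclic of order $2d$, with $K/H\cong C_2\times C_2$). Let $\lambda=(\lambda_1,\dots,\lambda_k)$ be a partition of $n$ and $\alpha,\beta\in K$. Then $P_\lambda^\alpha$ and $P_\lambda^\beta$ are conjugate in $G_n(K,H)$ if and only if $\alpha\beta^{-1}\in H$ or $\gcd(\lambda_1,\dots,\lambda_k)$ is odd.
   Context: $\mathbb{H}$: quaternions. $A_n(K,H)$: diagonal matrices $\mathrm{diag}(k_1,\dots,k_n)$, $k_i\in K$, $k_1\cdots k_n\in H$; $G_n(K,H)$: group generated by $A_n(K,H)$ and the permutation matrices $M(\sigma)$, acting on $\mathbb{H}^n$ by left multiplication. For a partition $\lambda=(\lambda_1,\dots,\lambda_k)$ of $n$ with partial sums $m_i=\lambda_1+\dots+\lambda_i$, $m_0=0$, let $I_i=\{m_{i-1}+1,\dots,m_i\}$; for $\alpha\in K$ let $D_\alpha=\mathrm{diag}(\alpha,1,\dots,1)$. Then $P_\lambda^\alpha=P_1\times\dots\times P_k$ with $P_i=\{D_\alpha M(\sigma)D_\alpha^{-1}:\sigma\in\mathrm{Sym}(I_i)\}$. *)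

theory Defs
  imports "HOL-Analysis.Analysis" "Jordan_Normal_Form.Matrix" "HOL-Combinatorics.Permutations"
begin

datatype quat = Quat (qRe: real) (qI: real) (qJ: real) (qK: real)

lemma quat_eq_iff: "x = y \<longleftrightarrow> qRe x = qRe y \<and> qI x = qI y \<and> qJ x = qJ y \<and> qK x = qK y"
  by (cases x; cases y) auto

instantiation quat :: ring_1
begin
definition "0 = Quat 0 0 0 0"
definition "1 = Quat 1 0 0 0"
definition "x + y = Quat (qRe x + qRe y) (qI x + qI y) (qJ x + qJ y) (qK x + qK y)"
definition "x - y = Quat (qRe x - qRe y) (qI x - qI y) (qJ x - qJ y) (qK x - qK y)"
definition "- x = Quat (- qRe x) (- qI x) (- qJ x) (- qK x)"
definition "x * y = Quat
   (qRe x * qRe y - qI x * qI y - qJ x * qJ y - qK x * qK y)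
   (qRe x * qI y + qI x * qRe y + qJ x * qK y - qK x * qJ y)
   (qRe x * qJ y - qI x * qK y + qJ x * qRe y + qK x * qI y)
   (qRe x * qK y + qI x * qJ y - qJ x * qI y + qK x * qRe y)"
instance
  by standard (auto simp: quat_eq_iff zero_quat_def one_quat_def plus_quat_def
      minus_quat_def uminus_quat_def times_quat_def algebra_simps)
end

definition qnorm2 :: "quat \<Rightarrow> real" where
  "qnorm2 x = (qRe x)^2 + (qI x)^2 + (qJ x)^2 + (qK x)^2"

lemma qnorm2_nz: "x \<noteq> 0 \<Longrightarrow> qnorm2 x \<noteq> 0"
proof -
  assume "x \<noteq> 0"
  then have "qRe x \<noteq> 0 \<or> qI x \<noteq> 0 \<or> qJ x \<noteq> 0 \<or> qK x \<noteq> 0"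
    by (auto simp: quat_eq_iff zero_quat_def)
  moreover have "(qRe x)^2 \<ge> 0" "(qI x)^2 \<ge> 0" "(qJ x)^2 \<ge> 0" "(qK x)^2 \<ge> 0" by simp_all
  ultimately have "qnorm2 x > 0" unfolding qnorm2_def
    by (smt (verit) power2_less_0 zero_less_power2)
  then show ?thesis by simp
qed

instantiation quat :: division_ring
begin
definition "inverse x = Quat (qRe x / qnorm2 x) (- qI x / qnorm2 x) (- qJ x / qnorm2 x) (- qK x / qnorm2 x)"
definition "divide x y = x * inverse (y::quat)"
instance
proof
  fix a :: quat assume "a \<noteq> 0"
  then have n: "qnorm2 a \<noteq> 0" by (rule qnorm2_nz)
  show "inverse a * a = 1" "a * inverse a = 1"
    using n by (auto simp: quat_eq_iff inverse_quat_def times_quat_def one_quat_def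
        times_divide_eq_right minus_divide_left[symmetric] add_divide_distrib[symmetric]
        diff_divide_distrib[symmetric] divide_eq_1_iff, auto simp: qnorm2_def power2_eq_square algebra_simps)
next
  show "inverse (0::quat) = 0" by (simp add: inverse_quat_def zero_quat_def quat_eq_iff)
qed (simp add: divide_quat_def)
end

definition quat_subgroup :: "quat set \<Rightarrow> bool" where
  "quat_subgroup K \<longleftrightarrow> 1 \<in> K \<and> 0 \<notin> K \<and> (\<forall>x\<in>K. \<forall>y\<in>K. x * y \<in> K) \<and> (\<forall>x\<in>K. inverse x \<in> K)"

definition binary_dihedral :: "nat \<Rightarrow> quat set \<Rightarrow> bool" where
  "binary_dihedral d K \<longleftrightarrow> quat_subgroup K \<and> finite K \<and> card K = 8 * d \<and>
     (\<exists>a\<in>K. \<exists>b\<in>K. K = {a ^ m * b ^ e | m e. m < 4 * d \<and> e < 2} \<and>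
        a ^ (4 * d) = 1 \<and> (\<forall>m. 0 < m \<and> m < 4 * d \<longrightarrow> a ^ m \<noteq> 1) \<and>
        b ^ 2 = a ^ (2 * d) \<and> b * a * inverse b = inverse a)"

definition commutator_subgroup :: "quat set \<Rightarrow> quat set" where
  "commutator_subgroup K = \<Inter>{S. quat_subgroup S \<and>
      {x * y * inverse x * inverse y | x y. x \<in> K \<and> y \<in> K} \<subseteq> S}"

definition mat_prod_list :: "nat \<Rightarrow> quat mat list \<Rightarrow> quat mat" where
  "mat_prod_list n ms = foldr (*) ms (1\<^sub>m n)"

definition A_set :: "nat \<Rightarrow> quat set \<Rightarrow> quat set \<Rightarrow> quat mat set" where
  "A_set n K H = {mat_diag n k | k. (\<forall>i<n. k i \<in> K) \<and> prod_list (map k [0..<n]) \<in> H}"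

definition perm_mat :: "nat \<Rightarrow> (nat \<Rightarrow> nat) \<Rightarrow> quat mat" where
  "perm_mat n \<sigma> = Matrix.mat n n (\<lambda>(i, j). if i = \<sigma> j then 1 else 0)"

inductive_set gen_group :: "nat \<Rightarrow> quat mat set \<Rightarrow> quat mat set" for n S where
  gen_one: "1\<^sub>m n \<in> gen_group n S"
| gen_mult: "s \<in> S \<Longrightarrow> h \<in> gen_group n S \<Longrightarrow> s * h \<in> gen_group n S"
| gen_inv: "s \<in> S \<Longrightarrow> s * t = 1\<^sub>m n \<Longrightarrow> t * s = 1\<^sub>m n \<Longrightarrow> h \<in> gen_group n S \<Longrightarrow> t * h \<in> gen_group n S"

definition G_group :: "nat \<Rightarrow> quat set \<Rightarrow> quat set \<Rightarrow> quat mat set" where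
  "G_group n K H = gen_group n (A_set n K H \<union> {perm_mat n \<sigma> | \<sigma>. \<sigma> permutes {0..<n}})"

definition is_partition :: "nat list \<Rightarrow> nat \<Rightarrow> bool" where
  "is_partition lam n \<longleftrightarrow> (\<forall>x\<in>set lam. 0 < x) \<and> sorted_wrt (\<ge>) lam \<and> sum_list lam = n"

text \<open>Block I_(i+1) (0-based index i, 0-based matrix indices): {m_i, ..., m_(i+1) - 1}.\<close>
definition block :: "nat list \<Rightarrow> nat \<Rightarrow> nat set" where
  "block lam i = {sum_list (take i lam) ..< sum_list (take (Suc i) lam)}"

definition D_mat :: "nat \<Rightarrow> quat \<Rightarrow> quat mat" where
  "D_mat n \<alpha> = mat_diag n (\<lambda>i. if i = 0 then \<alpha> else 1)"

definition P_factor :: "nat \<Rightarrow> quat \<Rightarrow> nat set \<Rightarrow> quat mat set" where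
  "P_factor n \<alpha> I = {D_mat n \<alpha> * perm_mat n \<sigma> * D_mat n (inverse \<alpha>) | \<sigma>. \<sigma> permutes I}"

text \<open>P_lambda^alpha = P_1 x ... x P_k (internal product of the commuting factors).\<close>
definition P_set :: "nat \<Rightarrow> nat list \<Rightarrow> quat \<Rightarrow> quat mat set" where
  "P_set n lam \<alpha> = {mat_prod_list n ps | ps. length ps = length lam \<and>
      (\<forall>i<length lam. ps ! i \<in> P_factor n \<alpha> (block lam i))}"

definition conj_in :: "nat \<Rightarrow> quat mat set \<Rightarrow> quat mat set \<Rightarrow> quat mat set \<Rightarrow> bool" where
  "conj_in n G P Q \<longleftrightarrow> (\<exists>g\<in>G. \<exists>g'. g * g' = 1\<^sub>m n \<and> g' * g = 1\<^sub>m n \<and> (\<lambda>p. g * p * g') ` P = Q)"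

end

theory Submission
  imports Defs "HOL-Library.Z2"
begin

(* Every element of G_n(K,H) is a monomial matrix with entries in K whose entries multiply into H.
   Since K/H = C2 x C2 is abelian, this is measured by a character psi of K with values in an
   elementary abelian 2-group and kernel H: the character values of the entries sum to 0.
   P_lambda^alpha is the set of D_alpha M(sigma) D_alpha^-1 with sigma in the Young subgroup of lambda.
   If psi alpha = psi beta, a diagonal matrix of A_n(K,H) conjugates one onto the other; if some part
   lambda_i is odd, the defect psi(alpha beta^-1) is absorbed by scaling the i-th block by
   alpha beta^-1, because an odd number of copies of it has the same character.
   Conversely, conjugating the transpositions inside a block shows that the entries of
   D_beta^-1 g D_alpha are constant on the blocks of lambda; when all parts are even their character
   sum vanishes, while it also equals psi alpha - psi beta. *)

lemma permutes_less:
  fixes n :: nat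
  assumes "\<sigma> permutes {0..<n}" "j < n"
  shows "\<sigma> j < n"
  using permutes_in_image[OF assms(1), of j] assms(2) by auto

lemma inverse_mat_carrier:
  assumes "A * B = 1\<^sub>m n" "B * A = 1\<^sub>m n"
  shows "B \<in> carrier_mat n n"
  using arg_cong[OF assms(1), of dim_col] arg_cong[OF assms(2), of dim_row] by auto

lemma mult_inverse_cancel_left:
  fixes x y :: "'a::division_ring"
  assumes "x \<noteq> 0"
  shows "x * (inverse x * y) = y" "inverse x * (x * y) = y"
  using assms by (simp_all add: mult.assoc[symmetric])

lemma sum_constant_exp2:
  fixes y :: "'a::ab_group_add"
  assumes "finite A" "y + y = 0"
  shows "(\<Sum>x\<in>A. y) = (if even (card A) then 0 else y)"
  using assms(1) by induction (auto simp: assms(2))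

lemma odd_Gcd_iff: "odd (Gcd A) \<longleftrightarrow> (\<exists>x\<in>A. odd (x::nat))"
proof
  assume "odd (Gcd A)"
  then show "\<exists>x\<in>A. odd x"
    using Gcd_greatest[of A 2] by blast
next
  assume "\<exists>x\<in>A. odd x"
  then obtain x where "x \<in> A" "odd x" by blast
  then show "odd (Gcd A)"
    using dvd_trans[OF _ Gcd_dvd[of x A], of 2] by blast
qed

lemma foldr_comp_closed:
  assumes "P id" "\<And>f g. P f \<Longrightarrow> P g \<Longrightarrow> P (f \<circ> g)" "\<forall>f\<in>set fs. P f"
  shows "P (foldr (\<circ>) fs id)"
  using assms(3) by (induction fs) (simp_all add: assms(1,2))

lemma foldr_comp_permutes: "\<forall>f\<in>set fs. f permutes S \<Longrightarrow> foldr (\<circ>) fs id permutes S"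
  by (rule foldr_comp_closed[where P = "\<lambda>f. f permutes S"]) (auto intro: permutes_compose permutes_id)

lemma nth_in_image_iff:
  "(length ps = k \<and> (\<forall>i<k. ps ! i \<in> f ` A i)) \<longleftrightarrow>
     (\<exists>xs. ps = map f xs \<and> length xs = k \<and> (\<forall>i<k. xs ! i \<in> A i))"
proof
  assume ps: "length ps = k \<and> (\<forall>i<k. ps ! i \<in> f ` A i)"
  then have "\<forall>i. \<exists>y. i < k \<longrightarrow> y \<in> A i \<and> ps ! i = f y"
    by blast
  then obtain g where g: "\<And>i. i < k \<Longrightarrow> g i \<in> A i \<and> ps ! i = f (g i)"
    by (metis choice)
  have "ps = map f (map g [0..<k])"
    using ps g by (intro nth_equalityI) auto
  moreover have "length (map g [0..<k]) = k" "\<forall>i<k. map g [0..<k] ! i \<in> A i"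
    using g by auto
  ultimately show "\<exists>xs. ps = map f xs \<and> length xs = k \<and> (\<forall>i<k. xs ! i \<in> A i)"
    by blast
next
  assume "\<exists>xs. ps = map f xs \<and> length xs = k \<and> (\<forall>i<k. xs ! i \<in> A i)"
  then obtain xs where "ps = map f xs" "length xs = k" "\<forall>i<k. xs ! i \<in> A i"
    by blast
  then show "length ps = k \<and> (\<forall>i<k. ps ! i \<in> f ` A i)"
    by simp
qed

section \<open>Monomial matrices\<close>

definition monomial_mat :: "nat \<Rightarrow> (nat \<Rightarrow> nat) \<Rightarrow> (nat \<Rightarrow> 'a::zero) \<Rightarrow> 'a mat" where
  "monomial_mat n \<pi> c = mat n n (\<lambda>(i, j). if i = \<pi> j then c j else 0)"

lemma monomial_mat_carrier [simp]: "monomial_mat n \<pi> c \<in> carrier_mat n n"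
  by (simp add: monomial_mat_def)

lemma dim_monomial_mat [simp]:
  "dim_row (monomial_mat n \<pi> c) = n" "dim_col (monomial_mat n \<pi> c) = n"
  by (simp_all add: monomial_mat_def)

lemma monomial_mat_cong:
  "(\<And>j. j < n \<Longrightarrow> c j = c' j) \<Longrightarrow> monomial_mat n \<pi> c = monomial_mat n \<pi> c'"
  by (auto simp: monomial_mat_def intro!: eq_matI)

lemma monomial_mat_mult:
  fixes c e :: "nat \<Rightarrow> 'a::semiring_0"
  assumes "\<And>j. j < n \<Longrightarrow> \<tau> j < n"
  shows "monomial_mat n \<pi> c * monomial_mat n \<tau> e = monomial_mat n (\<pi> \<circ> \<tau>) (\<lambda>j. c (\<tau> j) * e j)"
proof (rule eq_matI)
  fix i j assume "i < dim_row (monomial_mat n (\<pi> \<circ> \<tau>) (\<lambda>j. c (\<tau> j) * e j))"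
    and "j < dim_col (monomial_mat n (\<pi> \<circ> \<tau>) (\<lambda>j. c (\<tau> j) * e j))"
  then have i: "i < n" and j: "j < n" by auto
  have "(monomial_mat n \<pi> c * monomial_mat n \<tau> e) $$ (i, j) =
      (\<Sum>l = 0..<n. (if i = \<pi> l then c l else 0) * (if l = \<tau> j then e j else 0))"
    using i j by (simp add: monomial_mat_def scalar_prod_def)
  also have "\<dots> = (\<Sum>l = 0..<n. if l = \<tau> j then (if i = \<pi> l then c l else 0) * e j else 0)"
    by (rule sum.cong) auto
  also have "\<dots> = (if i = \<pi> (\<tau> j) then c (\<tau> j) else 0) * e j"
    using assms[OF j] by (simp add: sum.delta')
  finally show "(monomial_mat n \<pi> c * monomial_mat n \<tau> e) $$ (i, j) =
      monomial_mat n (\<pi> \<circ> \<tau>) (\<lambda>j. c (\<tau> j) * e j) $$ (i, j)"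
    using i j by (simp add: monomial_mat_def)
qed auto

lemma monomial_mat_eqD:
  assumes "monomial_mat n \<pi> c = monomial_mat n \<pi>' c'" "j < n" "\<pi> j < n" "c j \<noteq> 0"
  shows "\<pi>' j = \<pi> j" "c' j = c j"
proof -
  have "monomial_mat n \<pi> c $$ (\<pi> j, j) = monomial_mat n \<pi>' c' $$ (\<pi> j, j)"
    using assms(1) by simp
  then show "\<pi>' j = \<pi> j" "c' j = c j"
    using assms(2-4) by (simp_all add: monomial_mat_def split: if_splits)
qed

lemma one_mat_eq_monomial_mat: "1\<^sub>m n = monomial_mat n id (\<lambda>_. 1)"
  by (auto simp: monomial_mat_def)

lemma mat_diag_eq_monomial_mat: "mat_diag n k = monomial_mat n id k"
  by (auto simp: mat_diag_def monomial_mat_def)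

lemma perm_mat_eq_monomial_mat: "perm_mat n \<sigma> = monomial_mat n \<sigma> (\<lambda>_. 1)"
  by (auto simp: perm_mat_def monomial_mat_def)

section \<open>Blocks of a partition and Young subgroups\<close>

definition block_start :: "nat list \<Rightarrow> nat \<Rightarrow> nat" where
  "block_start lam i = sum_list (take i lam)"

lemma block_eq: "block lam i = {block_start lam i..<block_start lam (Suc i)}"
  by (simp add: block_def block_start_def)

lemma block_start_mono: "i \<le> j \<Longrightarrow> block_start lam i \<le> block_start lam j"
  using take_add[of i "j - i" lam] by (simp add: block_start_def)

lemma block_start_le: "block_start lam i \<le> sum_list lam"
  by (metis block_start_def append_take_drop_id le_add1 sum_list_append)

lemma block_start_Suc: "i < length lam \<Longrightarrow> block_start lam (Suc i) = block_start lam i + lam ! i"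
  by (simp add: block_start_def take_Suc_conv_app_nth)

lemma block_subset: "block lam i \<subseteq> {0..<sum_list lam}"
  using block_start_le[of lam "Suc i"] by (auto simp: block_eq)

lemma finite_block [simp]: "finite (block lam i)"
  by (simp add: block_eq)

lemma card_block: "i < length lam \<Longrightarrow> card (block lam i) = lam ! i"
  by (simp add: block_eq block_start_Suc)

lemma disjoint_blocks:
  assumes "i \<noteq> j"
  shows "block lam i \<inter> block lam j = {}"
  using assms block_start_mono[of "Suc i" j lam] block_start_mono[of "Suc j" i lam]
  by (cases "i < j") (auto simp: block_eq)

lemma sum_block_start: "sum f {0..<block_start lam k} = (\<Sum>i<k. sum f (block lam i))"
proof (induction k)
  case (Suc k)
  have "sum f {0..<block_start lam (Suc k)} = sum f {0..<block_start lam k} + sum f (block lam k)"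
    using block_start_mono[of k "Suc k" lam] by (simp add: block_eq sum.atLeastLessThan_concat)
  with Suc show ?case by simp
qed (simp add: block_start_def)

lemma sum_blocks: "sum f {0..<sum_list lam} = (\<Sum>i<length lam. sum f (block lam i))"
  using sum_block_start[of f lam "length lam"] by (simp add: block_start_def)

definition young_perms :: "nat list \<Rightarrow> (nat \<Rightarrow> nat) set" where
  "young_perms lam = {foldr (\<circ>) \<sigma>s id | \<sigma>s. length \<sigma>s = length lam \<and>
      (\<forall>i<length lam. \<sigma>s ! i permutes block lam i)}"

lemma permutes_block_preserves_blocks:
  assumes "\<tau> permutes block lam i"
  shows "\<tau> x \<in> block lam j \<longleftrightarrow> x \<in> block lam j"
proof (cases "x \<in> block lam i")
  case True
  then have "\<tau> x \<in> block lam i" using permutes_in_image[OF assms] by simp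
  then show ?thesis using True disjoint_blocks[of i j lam] by blast
next
  case False
  then show ?thesis using permutes_not_in[OF assms] by simp
qed

lemma young_permsD:
  assumes "\<sigma> \<in> young_perms lam"
  shows "\<sigma> permutes {0..<sum_list lam}" "\<sigma> x \<in> block lam j \<longleftrightarrow> x \<in> block lam j"
proof -
  define P where "P f \<longleftrightarrow> f permutes {0..<sum_list lam} \<and> (\<forall>x. f x \<in> block lam j \<longleftrightarrow> x \<in> block lam j)"
    for f :: "nat \<Rightarrow> nat"
  have P_comp: "P (f \<circ> g)" if "P f" "P g" for f g
    using that permutes_compose[of g _ f] by (simp add: P_def)
  have P_block: "P \<tau>" if "\<tau> permutes block lam i" for \<tau> i
    using permutes_subset[OF that block_subset] permutes_block_preserves_blocks[OF that]
    by (simp add: P_def)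
  obtain \<sigma>s where \<sigma>: "\<sigma> = foldr (\<circ>) \<sigma>s id" "length \<sigma>s = length lam"
    "\<forall>i<length lam. \<sigma>s ! i permutes block lam i"
    using assms unfolding young_perms_def by blast
  have "\<forall>\<tau>\<in>set \<sigma>s. \<exists>i. \<tau> permutes block lam i"
    using \<sigma>(2,3) by (metis in_set_conv_nth)
  moreover have "P id"
    unfolding P_def by (auto intro: permutes_id)
  ultimately have "P (foldr (\<circ>) \<sigma>s id)"
    using foldr_comp_closed[of P] P_comp P_block by blast
  then show "\<sigma> permutes {0..<sum_list lam}" "\<sigma> x \<in> block lam j \<longleftrightarrow> x \<in> block lam j"
    using \<sigma>(1) by (auto simp: P_def)
qed

lemma transpose_in_young_perms:
  assumes "i < length lam" "x \<in> block lam i" "y \<in> block lam i"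
  shows "Transposition.transpose x y \<in> young_perms lam"
proof -
  let ?\<sigma>s = "map (\<lambda>j. if j = i then Transposition.transpose x y else id) [0..<length lam]"
  have foldr_single: "foldr (\<circ>) (map (\<lambda>j. if j = i then t else id) xs) id =
      (if i \<in> set xs then t else id)" if "distinct xs" for t and xs :: "nat list"
    using that by (induction xs) auto
  have "foldr (\<circ>) ?\<sigma>s id = Transposition.transpose x y"
    unfolding foldr_single[OF distinct_upt] using assms(1) by simp
  moreover have "\<forall>j<length lam. ?\<sigma>s ! j permutes block lam j"
    using assms by (auto intro: permutes_swap_id)
  ultimately show ?thesis unfolding young_perms_def by (intro CollectI exI[of _ ?\<sigma>s]) auto
qed

section \<open>The subgroups \<open>P_lambda^alpha\<close>\<close>

definition D_entry :: "quat \<Rightarrow> nat \<Rightarrow> quat" where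
  "D_entry x i = (if i = 0 then x else 1)"

lemma D_mat_eq_monomial_mat: "D_mat n x = monomial_mat n id (D_entry x)"
  by (simp add: D_mat_def mat_diag_eq_monomial_mat D_entry_def[abs_def])

lemma D_entry_cancel:
  assumes "x \<noteq> 0"
  shows "D_entry x j * D_entry (inverse x) j = 1" "D_entry (inverse x) j * D_entry x j = 1"
    "D_entry x j * (D_entry (inverse x) j * y) = y" "D_entry (inverse x) j * (D_entry x j * y) = y"
  using assms by (simp_all add: D_entry_def mult.assoc[symmetric])

lemma D_entry_nonzero: "x \<noteq> 0 \<Longrightarrow> D_entry x j \<noteq> 0"
  by (simp add: D_entry_def)

definition twisted_perm_mat :: "nat \<Rightarrow> quat \<Rightarrow> (nat \<Rightarrow> nat) \<Rightarrow> quat mat" where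
  "twisted_perm_mat n x \<sigma> = monomial_mat n \<sigma> (\<lambda>j. D_entry x (\<sigma> j) * D_entry (inverse x) j)"

lemma D_perm_mat_D:
  assumes "\<sigma> permutes {0..<n}"
  shows "D_mat n x * perm_mat n \<sigma> * D_mat n (inverse x) = twisted_perm_mat n x \<sigma>"
  unfolding D_mat_eq_monomial_mat perm_mat_eq_monomial_mat twisted_perm_mat_def
  using permutes_less[OF assms] by (simp add: monomial_mat_mult)

lemma twisted_perm_mat_mult:
  assumes "x \<noteq> 0" "\<tau> permutes {0..<n}"
  shows "twisted_perm_mat n x \<sigma> * twisted_perm_mat n x \<tau> = twisted_perm_mat n x (\<sigma> \<circ> \<tau>)"
  unfolding twisted_perm_mat_def using permutes_less[OF assms(2)]
  by (auto simp: monomial_mat_mult mult.assoc D_entry_cancel[OF assms(1)] intro!: monomial_mat_cong)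

lemma twisted_perm_mat_id: "x \<noteq> 0 \<Longrightarrow> twisted_perm_mat n x id = 1\<^sub>m n"
  unfolding twisted_perm_mat_def one_mat_eq_monomial_mat
  by (auto simp: D_entry_cancel intro!: monomial_mat_cong)

lemma mat_prod_list_twisted_perm_mat:
  assumes "x \<noteq> 0" "\<forall>\<sigma>\<in>set \<sigma>s. \<sigma> permutes {0..<n}"
  shows "mat_prod_list n (map (twisted_perm_mat n x) \<sigma>s) = twisted_perm_mat n x (foldr (\<circ>) \<sigma>s id)"
  using assms(2)
  by (induction \<sigma>s) (simp_all add: mat_prod_list_def twisted_perm_mat_id[OF assms(1)]
      twisted_perm_mat_mult[OF assms(1)] foldr_comp_permutes)

lemma P_factor_eq_image:
  assumes "I \<subseteq> {0..<n}"
  shows "P_factor n x I = twisted_perm_mat n x ` {\<sigma>. \<sigma> permutes I}"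
  unfolding P_factor_def setcompr_eq_image
  by (rule image_cong) (simp_all add: D_perm_mat_D[OF permutes_subset[OF _ assms]])

lemma P_set_eq_image:
  assumes "x \<noteq> 0" "sum_list lam = n"
  shows "P_set n lam x = twisted_perm_mat n x ` young_perms lam"
proof -
  let ?Q = "\<lambda>\<sigma>s. length \<sigma>s = length lam \<and> (\<forall>i<length lam. \<sigma>s ! i permutes block lam i)"
  have blocks: "block lam i \<subseteq> {0..<n}" for i
    using block_subset[of lam i] assms(2) by simp
  have "P_set n lam x = mat_prod_list n ` map (twisted_perm_mat n x) ` {\<sigma>s. ?Q \<sigma>s}"
    unfolding P_set_def P_factor_eq_image[OF blocks] nth_in_image_iff setcompr_eq_image mem_Collect_eq ..
  also have "\<dots> = (\<lambda>\<sigma>s. twisted_perm_mat n x (foldr (\<circ>) \<sigma>s id)) ` {\<sigma>s. ?Q \<sigma>s}"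
    unfolding image_image
  proof (rule image_cong[OF refl])
    fix \<sigma>s assume "\<sigma>s \<in> {\<sigma>s. ?Q \<sigma>s}"
    then have "\<sigma>s ! i permutes {0..<n}" if "i < length \<sigma>s" for i
      using that permutes_subset[OF _ blocks[of i]] by auto
    then have "\<forall>\<sigma>\<in>set \<sigma>s. \<sigma> permutes {0..<n}"
      by (auto simp: in_set_conv_nth)
    then show "mat_prod_list n (map (twisted_perm_mat n x) \<sigma>s) = twisted_perm_mat n x (foldr (\<circ>) \<sigma>s id)"
      by (rule mat_prod_list_twisted_perm_mat[OF assms(1)])
  qed
  also have "\<dots> = twisted_perm_mat n x ` young_perms lam"
    unfolding young_perms_def setcompr_eq_image image_image ..
  finally show ?thesis .
qed


(* Column x of the identity g M_alpha((x y)) = M_beta(rho) g. *)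
lemma conjugating_monomial_mat_const_on_blocks:
  assumes "\<alpha> \<noteq> 0" "\<beta> \<noteq> 0" "\<pi> permutes {0..<n}" "\<And>j. j < n \<Longrightarrow> c j \<noteq> 0" "sum_list lam = n"
    and "monomial_mat n \<pi> c * g' = 1\<^sub>m n" "g' * monomial_mat n \<pi> c = 1\<^sub>m n"
    and "(\<lambda>p. monomial_mat n \<pi> c * p * g') ` twisted_perm_mat n \<alpha> ` young_perms lam
      \<subseteq> twisted_perm_mat n \<beta> ` young_perms lam"
    and "i < length lam" "x \<in> block lam i" "y \<in> block lam i"
  shows "D_entry (inverse \<beta>) (\<pi> x) * c x * D_entry \<alpha> x = D_entry (inverse \<beta>) (\<pi> y) * c y * D_entry \<alpha> y"
proof -
  let ?g = "monomial_mat n \<pi> c" and ?\<sigma> = "Transposition.transpose x y"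
  have xy: "x < n" "y < n"
    using block_subset[of lam i] assms(5,10,11) by auto
  have \<sigma>: "?\<sigma> \<in> young_perms lam"
    using transpose_in_young_perms[OF assms(9-11)] .
  then obtain \<rho> where \<rho>: "\<rho> \<in> young_perms lam" "?g * twisted_perm_mat n \<alpha> ?\<sigma> * g' = twisted_perm_mat n \<beta> \<rho>"
    using assms(8) by blast
  have g': "g' \<in> carrier_mat n n"
    using inverse_mat_carrier[OF assms(6,7)] .
  have carrier: "?g * twisted_perm_mat n \<alpha> ?\<sigma> \<in> carrier_mat n n"
    unfolding twisted_perm_mat_def by (rule mult_carrier_mat[of _ n n _ n]) simp_all
  have "?g * twisted_perm_mat n \<alpha> ?\<sigma> = ?g * twisted_perm_mat n \<alpha> ?\<sigma> * g' * ?g"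
    using assoc_mult_mat[OF carrier g', of ?g n] right_mult_one_mat[OF carrier] by (simp add: assms(7))
  also have "\<dots> = twisted_perm_mat n \<beta> \<rho> * ?g"
    using \<rho>(2) by simp
  finally have "monomial_mat n (\<pi> \<circ> ?\<sigma>) (\<lambda>j. c (?\<sigma> j) * (D_entry \<alpha> (?\<sigma> j) * D_entry (inverse \<alpha>) j)) =
      monomial_mat n (\<rho> \<circ> \<pi>) (\<lambda>j. D_entry \<beta> (\<rho> (\<pi> j)) * D_entry (inverse \<beta>) (\<pi> j) * c j)"
    unfolding twisted_perm_mat_def
    using permutes_less[OF young_permsD(1)[OF \<sigma>, unfolded assms(5)]]
      permutes_less[OF assms(3)] by (simp add: monomial_mat_mult)
  from monomial_mat_eqD[OF this xy(1)] have eq: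
    "D_entry \<beta> (\<pi> y) * D_entry (inverse \<beta>) (\<pi> x) * c x = c y * (D_entry \<alpha> y * D_entry (inverse \<alpha>) x)"
    using permutes_less[OF assms(3) xy(2)] assms(4)[OF xy(2)] D_entry_nonzero assms(1) by auto
  have "c y * D_entry \<alpha> y = c y * (D_entry \<alpha> y * D_entry (inverse \<alpha>) x) * D_entry \<alpha> x"
    using assms(1) by (simp add: mult.assoc D_entry_cancel)
  also have "\<dots> = D_entry \<beta> (\<pi> y) * D_entry (inverse \<beta>) (\<pi> x) * c x * D_entry \<alpha> x"
    by (simp only: eq)
  finally have "D_entry (inverse \<beta>) (\<pi> y) * (c y * D_entry \<alpha> y) =
      D_entry (inverse \<beta>) (\<pi> y) * (D_entry \<beta> (\<pi> y) * D_entry (inverse \<beta>) (\<pi> x) * c x * D_entry \<alpha> x)"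
    by (rule arg_cong)
  then show ?thesis
    using assms(2) by (simp add: mult.assoc D_entry_cancel)
qed

section \<open>Characters of \<open>K\<close> and the monomial group\<close>

locale quat_character =
  fixes K :: "quat set" and \<psi> :: "quat \<Rightarrow> 'g::ab_group_add"
  assumes subgroup: "quat_subgroup K"
    and char_mult: "x \<in> K \<Longrightarrow> y \<in> K \<Longrightarrow> \<psi> (x * y) = \<psi> x + \<psi> y"
begin

lemma one_in: "1 \<in> K"
  and mult_in: "x \<in> K \<Longrightarrow> y \<in> K \<Longrightarrow> x * y \<in> K"
  and inverse_in: "x \<in> K \<Longrightarrow> inverse x \<in> K"
  and nonzero: "x \<in> K \<Longrightarrow> x \<noteq> 0"
  using subgroup by (auto simp: quat_subgroup_def)

lemma char_one: "\<psi> 1 = 0"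
  using char_mult[OF one_in one_in] by simp

lemma char_inverse:
  assumes "x \<in> K"
  shows "\<psi> (inverse x) = - \<psi> x"
  using char_mult[OF inverse_in[OF assms] assms] nonzero[OF assms] char_one
  by (simp add: eq_neg_iff_add_eq_0)

lemma char_prod_list:
  "\<forall>j\<in>set xs. k j \<in> K \<Longrightarrow> prod_list (map k xs) \<in> K \<and> \<psi> (prod_list (map k xs)) = (\<Sum>j\<leftarrow>xs. \<psi> (k j))"
  by (induction xs) (auto simp: one_in char_one mult_in char_mult)

lemma char_D_entry: "x \<in> K \<Longrightarrow> \<psi> (D_entry x j) = (if j = 0 then \<psi> x else 0)"
  by (simp add: D_entry_def char_one)

lemma sum_char_D_entry: "x \<in> K \<Longrightarrow> 0 < n \<Longrightarrow> (\<Sum>j = 0..<n. \<psi> (D_entry x j)) = \<psi> x"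
  by (simp add: char_D_entry)

lemma D_entry_in: "x \<in> K \<Longrightarrow> D_entry x j \<in> K"
  by (simp add: D_entry_def one_in)

definition char_kernel :: "quat set" where
  "char_kernel = {x \<in> K. \<psi> x = 0}"

lemma mult_inverse_in_char_kernel_iff:
  assumes "x \<in> K" "y \<in> K"
  shows "x * inverse y \<in> char_kernel \<longleftrightarrow> \<psi> x = \<psi> y"
  using assms by (simp add: char_kernel_def mult_in inverse_in char_mult char_inverse)

lemma commutator_subgroup_subset_char_kernel: "commutator_subgroup K \<subseteq> char_kernel"
proof -
  have "quat_subgroup char_kernel"
    unfolding quat_subgroup_def char_kernel_def
    using one_in char_one nonzero mult_in char_mult inverse_in char_inverse by auto
  moreover have "x * y * inverse x * inverse y \<in> char_kernel" if "x \<in> K" "y \<in> K" for x y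
    using that by (simp add: char_kernel_def mult_in inverse_in char_mult char_inverse)
  ultimately show ?thesis
    unfolding commutator_subgroup_def by blast
qed

definition monomial_group :: "nat \<Rightarrow> quat mat set" where
  "monomial_group n = {monomial_mat n \<pi> c | \<pi> c. \<pi> permutes {0..<n} \<and> (\<forall>j<n. c j \<in> K) \<and>
      (\<Sum>j = 0..<n. \<psi> (c j)) = 0}"

lemma monomial_mat_in_monomial_group:
  "\<pi> permutes {0..<n} \<Longrightarrow> \<forall>j<n. c j \<in> K \<Longrightarrow> (\<Sum>j = 0..<n. \<psi> (c j)) = 0 \<Longrightarrow>
    monomial_mat n \<pi> c \<in> monomial_group n"
  unfolding monomial_group_def by blast

lemma monomial_groupE:
  assumes "A \<in> monomial_group n"
  obtains \<pi> c where "A = monomial_mat n \<pi> c" "\<pi> permutes {0..<n}" "\<forall>j<n. c j \<in> K"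
    "(\<Sum>j = 0..<n. \<psi> (c j)) = 0"
  using assms unfolding monomial_group_def by blast

lemma monomial_group_mult:
  assumes "A \<in> monomial_group n" "B \<in> monomial_group n"
  shows "A * B \<in> monomial_group n"
proof -
  obtain \<pi> c where A: "A = monomial_mat n \<pi> c" "\<pi> permutes {0..<n}" "\<forall>j<n. c j \<in> K"
    "(\<Sum>j = 0..<n. \<psi> (c j)) = 0"
    using assms(1) by (rule monomial_groupE)
  obtain \<tau> e where B: "B = monomial_mat n \<tau> e" "\<tau> permutes {0..<n}" "\<forall>j<n. e j \<in> K"
    "(\<Sum>j = 0..<n. \<psi> (e j)) = 0"
    using assms(2) by (rule monomial_groupE)
  have "(\<Sum>j = 0..<n. \<psi> (c (\<tau> j) * e j)) = (\<Sum>j = 0..<n. \<psi> (c (\<tau> j))) + (\<Sum>j = 0..<n. \<psi> (e j))"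
    using A(3) B(3) permutes_less[OF B(2)] by (simp add: char_mult sum.distrib)
  also have "(\<Sum>j = 0..<n. \<psi> (c (\<tau> j))) = (\<Sum>j = 0..<n. \<psi> (c j))"
    using sum.permute[OF B(2), of "\<lambda>j. \<psi> (c j)"] by (simp add: comp_def)
  finally have "(\<Sum>j = 0..<n. \<psi> (c (\<tau> j) * e j)) = 0"
    using A(4) B(4) by simp
  moreover have "A * B = monomial_mat n (\<pi> \<circ> \<tau>) (\<lambda>j. c (\<tau> j) * e j)"
    using A(1) B(1) permutes_less[OF B(2)] by (simp add: monomial_mat_mult)
  ultimately show ?thesis
    using A(3) B(3) permutes_less[OF B(2)] permutes_compose[OF B(2) A(2)] mult_in
    by (auto intro!: monomial_mat_in_monomial_group)
qed

lemma monomial_group_left_inverse: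
  assumes "A \<in> monomial_group n"
  shows "\<exists>B\<in>monomial_group n. B * A = 1\<^sub>m n"
proof -
  obtain \<pi> c where A: "A = monomial_mat n \<pi> c" "\<pi> permutes {0..<n}" "\<forall>j<n. c j \<in> K"
    "(\<Sum>j = 0..<n. \<psi> (c j)) = 0"
    using assms by (rule monomial_groupE)
  let ?\<pi>' = "inv_into UNIV \<pi>"
  have \<pi>': "?\<pi>' permutes {0..<n}"
    using permutes_inv[OF A(2)] .
  let ?B = "monomial_mat n ?\<pi>' (\<lambda>j. inverse (c (?\<pi>' j)))"
  have "?B * A = monomial_mat n (?\<pi>' \<circ> \<pi>) (\<lambda>j. inverse (c (?\<pi>' (\<pi> j))) * c j)"
    using A(1) permutes_less[OF A(2)] by (simp add: monomial_mat_mult)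
  also have "\<dots> = 1\<^sub>m n"
    unfolding one_mat_eq_monomial_mat permutes_inv_o(2)[OF A(2)]
    using A(3) nonzero by (auto intro!: monomial_mat_cong simp: permutes_inverses(2)[OF A(2)])
  finally have "?B * A = 1\<^sub>m n" .
  moreover have "(\<Sum>j = 0..<n. \<psi> (inverse (c (?\<pi>' j)))) = - (\<Sum>j = 0..<n. \<psi> (c j))"
    using A(3) permutes_less[OF \<pi>'] sum.permute[OF \<pi>', of "\<lambda>j. \<psi> (c j)"]
    by (simp add: char_inverse sum_negf comp_def)
  then have "?B \<in> monomial_group n"
    using \<pi>' A(3,4) permutes_less[OF \<pi>'] inverse_in by (auto intro!: monomial_mat_in_monomial_group)
  ultimately show ?thesis by blast
qed

lemma monomial_group_inverse:
  assumes "A \<in> monomial_group n" "A * A' = 1\<^sub>m n" "A' * A = 1\<^sub>m n"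
  shows "A' \<in> monomial_group n"
proof -
  obtain B where B: "B \<in> monomial_group n" "B * A = 1\<^sub>m n"
    using monomial_group_left_inverse[OF assms(1)] by blast
  have carrier: "A \<in> carrier_mat n n" "A' \<in> carrier_mat n n" "B \<in> carrier_mat n n"
    using assms(1) B(1) inverse_mat_carrier[OF assms(2,3)] by (auto simp: monomial_group_def)
  have "A' = B * A * A'"
    using B(2) carrier by simp
  also have "\<dots> = B"
    using assms(2) carrier by (simp add: assoc_mult_mat[of B n n A n A' n])
  finally show ?thesis using B(1) by simp
qed

lemma A_set_subset_monomial_group: "A_set n K char_kernel \<subseteq> monomial_group n"
proof
  fix s assume "s \<in> A_set n K char_kernel"
  then obtain k where k: "s = mat_diag n k" "\<forall>i<n. k i \<in> K" "prod_list (map k [0..<n]) \<in> char_kernel"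
    unfolding A_set_def by blast
  then have "(\<Sum>j = 0..<n. \<psi> (k j)) = 0"
    using char_prod_list[of "[0..<n]" k] by (simp add: char_kernel_def sum_list_distinct_conv_sum_set)
  then show "s \<in> monomial_group n"
    unfolding k(1) mat_diag_eq_monomial_mat using k(2)
    by (intro monomial_mat_in_monomial_group[OF permutes_id]) auto
qed

lemma perm_mat_in_monomial_group: "\<sigma> permutes {0..<n} \<Longrightarrow> perm_mat n \<sigma> \<in> monomial_group n"
  unfolding perm_mat_eq_monomial_mat using one_in char_one by (auto intro!: monomial_mat_in_monomial_group)

lemma generators_in_monomial_group:
  assumes "s \<in> A_set n K char_kernel \<union> {perm_mat n \<sigma> | \<sigma>. \<sigma> permutes {0..<n}}"
  shows "s \<in> monomial_group n"
  using assms A_set_subset_monomial_group perm_mat_in_monomial_group by auto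

lemma G_group_subset_monomial_group: "G_group n K char_kernel \<subseteq> monomial_group n"
proof
  fix g assume "g \<in> G_group n K char_kernel"
  then show "g \<in> monomial_group n"
    unfolding G_group_def
  proof (induction rule: gen_group.induct)
    case gen_one
    have "perm_mat n id = 1\<^sub>m n"
      by (auto simp: perm_mat_def)
    then show ?case
      using perm_mat_in_monomial_group[of id n] permutes_id by metis
  next
    case (gen_mult s h)
    show ?case
      by (rule monomial_group_mult[OF generators_in_monomial_group[OF gen_mult.hyps(1)] gen_mult.IH])
  next
    case (gen_inv s t h)
    have "t \<in> monomial_group n"
      using monomial_group_inverse[OF generators_in_monomial_group] gen_inv.hyps(1-3) .
    then show ?case
      by (rule monomial_group_mult[OF _ gen_inv.IH])
  qed
qed

lemma conj_in_twisted_perm_mats: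
  assumes "\<alpha> \<in> K" "\<beta> \<in> K" "0 < n" "sum_list lam = n" "\<And>j. \<epsilon> j \<in> K"
    and "\<And>\<sigma> j. \<sigma> \<in> young_perms lam \<Longrightarrow> \<epsilon> (\<sigma> j) = \<epsilon> j"
    and "\<psi> \<beta> + (\<Sum>j = 0..<n. \<psi> (\<epsilon> j)) = \<psi> \<alpha>"
  shows "conj_in n (G_group n K char_kernel)
    (twisted_perm_mat n \<alpha> ` young_perms lam) (twisted_perm_mat n \<beta> ` young_perms lam)"
proof -
  \<comment> \<open>The conjugator is \<open>D_beta diag(epsilon) D_alpha^-1\<close>; the character condition puts it into \<open>A_n(K,H)\<close>.\<close>
  define k where "k j = D_entry \<beta> j * \<epsilon> j * D_entry (inverse \<alpha>) j" for j
  define k' where "k' j = D_entry \<alpha> j * inverse (\<epsilon> j) * D_entry (inverse \<beta>) j" for j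
  let ?g = "mat_diag n k" and ?g' = "mat_diag n k'"
  have nonzero: "\<alpha> \<noteq> 0" "\<beta> \<noteq> 0" "\<And>j. \<epsilon> j \<noteq> 0"
    using assms(1,2,5) nonzero by auto
  have k: "\<forall>j\<in>set [0..<n]. k j \<in> K"
    using assms(1,2,5) by (simp add: k_def D_entry_in inverse_in mult_in)
  have "(\<Sum>j = 0..<n. \<psi> (k j)) = \<psi> \<beta> + (\<Sum>j = 0..<n. \<psi> (\<epsilon> j)) - \<psi> \<alpha>"
    using assms(1-3,5) by (simp add: k_def D_entry_in inverse_in mult_in char_mult char_D_entry
        char_inverse sum.distrib)
  then have "prod_list (map k [0..<n]) \<in> char_kernel"
    using char_prod_list[OF k] assms(7) by (simp add: char_kernel_def sum_list_distinct_conv_sum_set)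
  then have "?g \<in> A_set n K char_kernel"
    using k unfolding A_set_def by auto
  then have "?g * 1\<^sub>m n \<in> G_group n K char_kernel"
    unfolding G_group_def by (blast intro: gen_group.intros)
  moreover have "?g \<in> carrier_mat n n"
    by (simp add: mat_diag_eq_monomial_mat)
  ultimately have g: "?g \<in> G_group n K char_kernel"
    by simp
  have "?g * ?g' = 1\<^sub>m n" "?g' * ?g = 1\<^sub>m n"
    unfolding mat_diag_eq_monomial_mat one_mat_eq_monomial_mat
    by (auto simp: monomial_mat_mult k_def k'_def mult.assoc D_entry_cancel nonzero
        mult_inverse_cancel_left intro!: monomial_mat_cong)
  moreover have "?g * twisted_perm_mat n \<alpha> \<sigma> * ?g' = twisted_perm_mat n \<beta> \<sigma>"
    if "\<sigma> \<in> young_perms lam" for \<sigma>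
    using permutes_less[OF young_permsD(1)[OF that, unfolded assms(4)]]
      assms(6)[OF that]
    unfolding mat_diag_eq_monomial_mat twisted_perm_mat_def
    by (auto simp: monomial_mat_mult k_def k'_def mult.assoc D_entry_cancel nonzero
        mult_inverse_cancel_left intro!: monomial_mat_cong)
  then have "(\<lambda>p. ?g * p * ?g') ` twisted_perm_mat n \<alpha> ` young_perms lam = twisted_perm_mat n \<beta> ` young_perms lam"
    unfolding image_image by (rule image_cong[OF refl])
  ultimately show ?thesis
    unfolding conj_in_def using g by blast
qed

end

locale quat_character_exp2 = quat_character K \<psi> for K and \<psi> :: "quat \<Rightarrow> 'g::ab_group_add" +
  assumes char_double: "x \<in> K \<Longrightarrow> \<psi> x + \<psi> x = 0"
begin

lemma sum_char_even_blocks: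
  assumes "\<forall>x\<in>set lam. even x" "\<And>j. j < sum_list lam \<Longrightarrow> f j \<in> K"
    and "\<And>i x y. i < length lam \<Longrightarrow> x \<in> block lam i \<Longrightarrow> y \<in> block lam i \<Longrightarrow> f x = f y"
  shows "(\<Sum>j = 0..<sum_list lam. \<psi> (f j)) = 0"
proof -
  have "(\<Sum>j\<in>block lam i. \<psi> (f j)) = 0" if i: "i < length lam" for i
  proof (cases "block lam i = {}")
    case False
    then obtain x where x: "x \<in> block lam i"
      by blast
    then have "x < sum_list lam"
      using block_subset[of lam i] by auto
    have "(\<Sum>j\<in>block lam i. \<psi> (f j)) = (\<Sum>j\<in>block lam i. \<psi> (f x))"
      using assms(3)[OF i _ x] by simp
    also have "\<dots> = 0"
      using sum_constant_exp2[OF finite_block char_double[OF assms(2)[OF \<open>x < sum_list lam\<close>]]]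
        card_block[OF i] assms(1) nth_mem[OF i] by simp
    finally show ?thesis .
  qed simp
  then show ?thesis
    by (simp add: sum_blocks)
qed

lemma char_eq_if_conj_in:
  assumes "\<alpha> \<in> K" "\<beta> \<in> K" "0 < n" "sum_list lam = n" "\<forall>x\<in>set lam. even x"
    and "conj_in n (G_group n K char_kernel)
      (twisted_perm_mat n \<alpha> ` young_perms lam) (twisted_perm_mat n \<beta> ` young_perms lam)"
  shows "\<psi> \<alpha> = \<psi> \<beta>"
proof -
  obtain g g' where g: "g \<in> G_group n K char_kernel" "g * g' = 1\<^sub>m n" "g' * g = 1\<^sub>m n"
    and conj: "(\<lambda>p. g * p * g') ` twisted_perm_mat n \<alpha> ` young_perms lam = twisted_perm_mat n \<beta> ` young_perms lam"
    using assms(6) unfolding conj_in_def by blast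
  obtain \<pi> c where g_eq: "g = monomial_mat n \<pi> c" and \<pi>: "\<pi> permutes {0..<n}"
    and c: "\<forall>j<n. c j \<in> K" and sum_c: "(\<Sum>j = 0..<n. \<psi> (c j)) = 0"
    by (rule monomial_groupE[OF subsetD[OF G_group_subset_monomial_group g(1)]])
  define e where "e j = D_entry (inverse \<beta>) (\<pi> j) * c j * D_entry \<alpha> j" for j
  have factors_in: "D_entry (inverse \<beta>) (\<pi> j) \<in> K" "c j \<in> K" "D_entry \<alpha> j \<in> K" if "j < n" for j
    using that assms(1,2) c by (simp_all add: D_entry_in inverse_in)
  have c_nonzero: "c j \<noteq> 0" if "j < n" for j
    using factors_in(2)[OF that] nonzero by blast
  have "e x = e y" if "i < length lam" "x \<in> block lam i" "y \<in> block lam i" for i x y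
    unfolding e_def
    by (rule conjugating_monomial_mat_const_on_blocks[OF nonzero[OF assms(1)] nonzero[OF assms(2)] \<pi>
          c_nonzero assms(4) g(2,3)[unfolded g_eq] equalityD1[OF conj[unfolded g_eq]] that])
  moreover have "e j \<in> K" if "j < sum_list lam" for j
    using that factors_in assms(4) by (simp add: e_def mult_in)
  ultimately have "(\<Sum>j = 0..<sum_list lam. \<psi> (e j)) = 0"
    using sum_char_even_blocks[OF assms(5)] by blast
  then have "0 = (\<Sum>j = 0..<n. \<psi> (D_entry (inverse \<beta>) (\<pi> j)) + \<psi> (c j) + \<psi> (D_entry \<alpha> j))"
    using factors_in assms(4) by (simp add: e_def char_mult mult_in)
  also have "\<dots> = (\<Sum>j = 0..<n. \<psi> (D_entry (inverse \<beta>) (\<pi> j))) + (\<Sum>j = 0..<n. \<psi> (D_entry \<alpha> j))"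
    using sum_c by (simp add: sum.distrib)
  also have "(\<Sum>j = 0..<n. \<psi> (D_entry (inverse \<beta>) (\<pi> j))) = (\<Sum>j = 0..<n. \<psi> (D_entry (inverse \<beta>) j))"
    using sum.permute[OF \<pi>, of "\<lambda>j. \<psi> (D_entry (inverse \<beta>) j)"] by (simp add: comp_def)
  finally show ?thesis
    using assms(1-3) by (simp add: sum_char_D_entry inverse_in char_inverse)
qed

lemma conj_in_twisted_perm_mats_if_char_eq:
  assumes "\<alpha> \<in> K" "\<beta> \<in> K" "0 < n" "sum_list lam = n" "\<psi> \<alpha> = \<psi> \<beta>"
  shows "conj_in n (G_group n K char_kernel)
    (twisted_perm_mat n \<alpha> ` young_perms lam) (twisted_perm_mat n \<beta> ` young_perms lam)"
proof -
  have "\<psi> \<beta> + (\<Sum>j = 0..<n. \<psi> (1::quat)) = \<psi> \<alpha>"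
    using assms(5) by (simp add: char_one)
  then show ?thesis
    by (rule conj_in_twisted_perm_mats[OF assms(1-4) one_in refl])
qed

lemma conj_in_twisted_perm_mats_if_odd_part:
  assumes "\<alpha> \<in> K" "\<beta> \<in> K" "0 < n" "sum_list lam = n" "i < length lam" "odd (lam ! i)"
  shows "conj_in n (G_group n K char_kernel)
    (twisted_perm_mat n \<alpha> ` young_perms lam) (twisted_perm_mat n \<beta> ` young_perms lam)"
proof -
  define \<gamma> where "\<gamma> = \<alpha> * inverse \<beta>"
  define \<epsilon> where "\<epsilon> j = (if j \<in> block lam i then \<gamma> else 1)" for j
  have \<gamma>: "\<gamma> \<in> K"
    using assms(1,2) by (simp add: \<gamma>_def mult_in inverse_in)
  have "(\<Sum>j = 0..<n. \<psi> (\<epsilon> j)) = (\<Sum>j = 0..<n. if j \<in> block lam i then \<psi> \<gamma> else 0)"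
    by (rule sum.cong) (simp_all add: \<epsilon>_def char_one)
  also have "\<dots> = (\<Sum>j\<in>{0..<n} \<inter> block lam i. \<psi> \<gamma>)"
    by (simp add: sum.inter_restrict)
  also have "{0..<n} \<inter> block lam i = block lam i"
    using block_subset[of lam i] assms(4) by auto
  also have "(\<Sum>j\<in>block lam i. \<psi> \<gamma>) = \<psi> \<gamma>"
    using sum_constant_exp2[OF finite_block char_double[OF \<gamma>]] card_block[OF assms(5)] assms(6) by simp
  finally have "\<psi> \<beta> + (\<Sum>j = 0..<n. \<psi> (\<epsilon> j)) = \<psi> \<alpha>"
    using assms(1,2) by (simp add: \<gamma>_def inverse_in char_mult char_inverse)
  moreover have "\<epsilon> j \<in> K" for j
    using \<gamma> one_in by (simp add: \<epsilon>_def)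
  moreover have "\<epsilon> (\<sigma> j) = \<epsilon> j" if "\<sigma> \<in> young_perms lam" for \<sigma> j
    using young_permsD(2)[OF that] by (simp add: \<epsilon>_def)
  ultimately show ?thesis
    by (rule conj_in_twisted_perm_mats[OF assms(1-4), rotated -1])
qed

theorem conj_in_P_set_iff:
  assumes "\<alpha> \<in> K" "\<beta> \<in> K" "0 < n" "sum_list lam = n"
  shows "conj_in n (G_group n K char_kernel) (P_set n lam \<alpha>) (P_set n lam \<beta>) \<longleftrightarrow>
    \<psi> \<alpha> = \<psi> \<beta> \<or> odd (Gcd (set lam))"
  unfolding P_set_eq_image[OF nonzero[OF assms(1)] assms(4)] P_set_eq_image[OF nonzero[OF assms(2)] assms(4)]
    odd_Gcd_iff in_set_conv_nth
  using conj_in_twisted_perm_mats_if_char_eq[OF assms] conj_in_twisted_perm_mats_if_odd_part[OF assms]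
    char_eq_if_conj_in[OF assms] by (metis in_set_conv_nth)

end

section \<open>Binary dihedral groups\<close>

lemma of_nat_bit_eq_iff: "(of_nat k :: bit) = of_nat l \<longleftrightarrow> (even k \<longleftrightarrow> even l)"
  by (simp only: Z2.bit_eq_iff even_of_nat_iff)

lemma bit_prod_add_self: "y + y = (0 :: bit \<times> bit)"
  by (cases y) (simp add: zero_prod_def)

lemma quat_subgroup_power: "quat_subgroup S \<Longrightarrow> x \<in> S \<Longrightarrow> x ^ k \<in> S"
  by (induction k) (auto simp: quat_subgroup_def)

locale binary_dihedral_gens =
  fixes d :: nat and K :: "quat set" and a b :: quat
  assumes subgroup: "quat_subgroup K" and card_K: "card K = 8 * d"
    and K_eq: "K = {a ^ m * b ^ e | m e. m < 4 * d \<and> e < 2}"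
    and a_order: "a ^ (4 * d) = 1" and b_square: "b ^ 2 = a ^ (2 * d)"
    and b_conj_a: "b * a * inverse b = inverse a" and d_pos: "0 < d"
begin

lemma a_nonzero: "a \<noteq> 0"
proof
  assume "a = 0"
  with a_order d_pos show False
    by (simp add: power_0_left)
qed

lemma b_nonzero: "b \<noteq> 0"
  using b_square a_nonzero by auto

lemma a_pow_mod: "a ^ m = a ^ (m mod (4 * d))"
proof -
  have "a ^ m = a ^ (4 * d * (m div (4 * d)) + m mod (4 * d))"
    by simp
  also have "\<dots> = (a ^ (4 * d)) ^ (m div (4 * d)) * a ^ (m mod (4 * d))"
    by (simp only: power_add power_mult)
  finally show ?thesis
    by (simp add: a_order)
qed

lemma b_mult_a: "b * a = a ^ (4 * d - 1) * b"
proof -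
  have "a * a ^ (4 * d - 1) = 1"
    using a_order d_pos by (simp flip: power_Suc)
  then have inverse_a: "inverse a = a ^ (4 * d - 1)"
    by (rule inverse_unique)
  have "b * a = (b * a * inverse b) * b"
    using b_nonzero by (simp add: mult.assoc)
  also have "\<dots> = a ^ (4 * d - 1) * b"
    by (simp only: b_conj_a inverse_a)
  finally show ?thesis .
qed

lemma b_mult_a_pow: "b * a ^ m = a ^ (m * (4 * d - 1)) * b"
proof (induction m)
  case (Suc m)
  have "b * a ^ Suc m = (b * a) * a ^ m"
    by (simp add: mult.assoc)
  also have "\<dots> = a ^ (4 * d - 1) * (b * a ^ m)"
    by (simp add: b_mult_a mult.assoc)
  also have "\<dots> = a ^ (4 * d - 1) * a ^ (m * (4 * d - 1)) * b"
    by (simp add: Suc mult.assoc)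
  also have "\<dots> = a ^ (Suc m * (4 * d - 1)) * b"
    by (simp add: power_add)
  finally show ?case .
qed simp

lemma b_pow_mult_a_pow: "b ^ e * a ^ m = a ^ (m * (4 * d - 1) ^ e) * b ^ e"
proof (induction e arbitrary: m)
  case (Suc e)
  have "b ^ Suc e * a ^ m = b ^ e * (b * a ^ m)"
    by (simp only: power_Suc2 mult.assoc)
  also have "\<dots> = (b ^ e * a ^ (m * (4 * d - 1))) * b"
    by (simp add: b_mult_a_pow mult.assoc)
  also have "\<dots> = a ^ (m * (4 * d - 1) * (4 * d - 1) ^ e) * b ^ e * b"
    by (simp only: Suc)
  also have "m * (4 * d - 1) * (4 * d - 1) ^ e = m * (4 * d - 1) ^ Suc e"
    by simp
  also have "a ^ (m * (4 * d - 1) ^ Suc e) * b ^ e * b = a ^ (m * (4 * d - 1) ^ Suc e) * b ^ Suc e"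
    by (simp only: power_Suc2 mult.assoc)
  finally show ?case .
qed simp

lemma b_pow_eq: "b ^ e = a ^ (2 * d * (e div 2)) * b ^ (e mod 2)"
proof -
  have "b ^ e = b ^ (2 * (e div 2) + e mod 2)"
    by simp
  also have "\<dots> = (b ^ 2) ^ (e div 2) * b ^ (e mod 2)"
    by (simp only: power_add power_mult)
  finally show ?thesis
    by (simp only: b_square power_mult)
qed

lemma normal_form: "a ^ m * b ^ e = a ^ ((m + 2 * d * (e div 2)) mod (4 * d)) * b ^ (e mod 2)"
proof -
  have "a ^ m * b ^ e = a ^ (m + 2 * d * (e div 2)) * b ^ (e mod 2)"
    by (subst b_pow_eq) (simp only: power_add mult.assoc)
  also have "\<dots> = a ^ ((m + 2 * d * (e div 2)) mod (4 * d)) * b ^ (e mod 2)"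
    using a_pow_mod[of "m + 2 * d * (e div 2)"] by (rule arg_cong)
  finally show ?thesis .
qed

definition dihedral_exps :: "quat \<Rightarrow> nat \<times> nat" where
  "dihedral_exps = the_inv_into ({..<4 * d} \<times> {..<2}) (\<lambda>(m, e). a ^ m * b ^ e)"

(* The abelianisation K -> K/[K,K] = C2 x C2: parities of the exponents in the normal form a^m b^e. *)
definition dihedral_char :: "quat \<Rightarrow> bit \<times> bit" where
  "dihedral_char x = (of_nat (fst (dihedral_exps x)), of_nat (snd (dihedral_exps x)))"

lemma K_eq_image: "K = (\<lambda>(m, e). a ^ m * b ^ e) ` ({..<4 * d} \<times> {..<2})"
  unfolding K_eq by auto

lemma inj_on_exps: "inj_on (\<lambda>(m, e). a ^ m * b ^ e) ({..<4 * d} \<times> {..<2})"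
  by (rule eq_card_imp_inj_on) (simp_all add: K_eq_image[symmetric] card_K)

lemma dihedral_char_pow: "dihedral_char (a ^ m * b ^ e) = (of_nat m, of_nat e)"
proof -
  let ?M = "(m + 2 * d * (e div 2)) mod (4 * d)" and ?E = "e mod 2"
  have "dihedral_exps (a ^ m * b ^ e) = dihedral_exps (a ^ ?M * b ^ ?E)"
    by (simp only: normal_form[of m e])
  also have "\<dots> = (?M, ?E)"
    unfolding dihedral_exps_def using the_inv_into_f_f[OF inj_on_exps, of "(?M, ?E)"] d_pos by simp
  finally have exps: "dihedral_exps (a ^ m * b ^ e) = (?M, ?E)" .
  have "?M mod 2 = m mod 2"
    by (simp add: mod_mod_cancel mult.assoc)
  then have "(of_nat ?M :: bit) = of_nat m"
    unfolding of_nat_bit_eq_iff even_iff_mod_2_eq_zero by simp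
  moreover have "(of_nat ?E :: bit) = of_nat e"
    unfolding of_nat_bit_eq_iff by simp
  ultimately show ?thesis
    by (simp only: dihedral_char_def exps fst_conv snd_conv)
qed

lemma a_in: "a \<in> K"
proof -
  have "a = a ^ 1 * b ^ 0" "1 < 4 * d" "(0::nat) < 2"
    using d_pos by simp_all
  then show ?thesis
    unfolding K_eq by blast
qed

lemma b_in: "b \<in> K"
proof -
  have "b = a ^ 0 * b ^ 1" "0 < 4 * d" "(1::nat) < 2"
    using d_pos by simp_all
  then show ?thesis
    unfolding K_eq by blast
qed

lemma dihedral_char_mult:
  assumes "x \<in> K" "y \<in> K"
  shows "dihedral_char (x * y) = dihedral_char x + dihedral_char y"
proof -
  obtain m e m' e' where x: "x = a ^ m * b ^ e" and y: "y = a ^ m' * b ^ e'"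
    using assms unfolding K_eq by blast
  have "x * y = a ^ m * (b ^ e * a ^ m') * b ^ e'"
    by (simp add: x y mult.assoc)
  also have "\<dots> = a ^ m * (a ^ (m' * (4 * d - 1) ^ e) * b ^ e) * b ^ e'"
    by (simp only: b_pow_mult_a_pow)
  also have "\<dots> = a ^ (m + m' * (4 * d - 1) ^ e) * b ^ (e + e')"
    by (simp add: power_add mult.assoc)
  finally have xy: "x * y = a ^ (m + m' * (4 * d - 1) ^ e) * b ^ (e + e')" .
  have "odd (4 * d - 1)"
    using d_pos by (simp add: even_diff_nat)
  then have "(of_nat (m' * (4 * d - 1) ^ e) :: bit) = of_nat m'"
    by (simp add: of_nat_bit_eq_iff)
  then show ?thesis
    unfolding xy unfolding x y dihedral_char_pow by (simp only: of_nat_add add_Pair)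
qed

sublocale quat_character_exp2 K dihedral_char
  by unfold_locales (simp_all add: subgroup dihedral_char_mult bit_prod_add_self)

lemma a_square_pow_in_commutator_subgroup: "(a ^ 2) ^ k \<in> commutator_subgroup K"
  unfolding commutator_subgroup_def
proof clarify
  fix S assume S: "quat_subgroup S" "{x * y * inverse x * inverse y |x y. x \<in> K \<and> y \<in> K} \<subseteq> S"
  have "b * a * inverse b * inverse a \<in> S"
    using S(2) a_in b_in by blast
  then have "inverse (a ^ 2) \<in> S"
    using a_nonzero by (simp add: b_conj_a power2_eq_square nonzero_inverse_mult_distrib)
  then have "a ^ 2 \<in> S"
    using S(1) unfolding quat_subgroup_def by (metis inverse_inverse_eq)
  then show "(a ^ 2) ^ k \<in> S"
    by (rule quat_subgroup_power[OF S(1)])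
qed

lemma commutator_subgroup_eq_char_kernel: "commutator_subgroup K = char_kernel"
proof
  show "char_kernel \<subseteq> commutator_subgroup K"
  proof
    fix x assume "x \<in> char_kernel"
    then have x: "x \<in> K" "dihedral_char x = 0"
      by (simp_all add: char_kernel_def)
    then obtain m e where x_eq: "x = a ^ m * b ^ e" and "e < 2"
      unfolding K_eq by blast
    moreover have "(of_nat m :: bit) = of_nat 0" "(of_nat e :: bit) = of_nat 0"
      using x(2) by (simp_all add: x_eq dihedral_char_pow zero_prod_def)
    ultimately have "even m" "e = 0"
      unfolding of_nat_bit_eq_iff by auto
    then have "x = (a ^ 2) ^ (m div 2)"
      by (simp add: x_eq dvd_mult_div_cancel flip: power_mult)
    then show "x \<in> commutator_subgroup K"
      using a_square_pow_in_commutator_subgroup by simp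
  qed
qed (rule commutator_subgroup_subset_char_kernel)

end

theorem lemma4p9:
  fixes n d :: nat and K H :: "quat set" and lam :: "nat list" and \<alpha> \<beta> :: quat
  assumes "n \<ge> 3" and "d \<ge> 2"
    and "binary_dihedral d K"
    and "H = commutator_subgroup K"
    and "is_partition lam n"
    and "\<alpha> \<in> K" and "\<beta> \<in> K"
  shows "conj_in n (G_group n K H) (P_set n lam \<alpha>) (P_set n lam \<beta>) \<longleftrightarrow>
         (\<alpha> * inverse \<beta> \<in> H \<or> odd (Gcd (set lam)))"
proof -
  obtain a b where "quat_subgroup K" "card K = 8 * d" "K = {a ^ m * b ^ e | m e. m < 4 * d \<and> e < 2}"
    "a ^ (4 * d) = 1" "b ^ 2 = a ^ (2 * d)" "b * a * inverse b = inverse a"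
    using assms(3) unfolding binary_dihedral_def by blast
  moreover have "0 < d"
    using assms(2) by simp
  ultimately interpret binary_dihedral_gens d K a b
    by (rule binary_dihedral_gens.intro)
  have H: "H = char_kernel"
    using assms(4) commutator_subgroup_eq_char_kernel by simp
  have "0 < n" "sum_list lam = n"
    using assms(1,5) by (auto simp: is_partition_def)
  then show ?thesis
    unfolding H mult_inverse_in_char_kernel_iff[OF assms(6,7)]
    by (rule conj_in_P_set_iff[OF assms(6,7)])
qed

end
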